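(* Let $S$ be a monoid whose unique maximal right ideal $\mathfrak{M}$ is two-sided, and let $A$ be a right $S$-act with a maximal subact $B$. Suppose $AI=A$ for some proper right ideal $I$ of $S$. Then for every $a\in A\setminus B$ there exists $m\in\mathfrak{M}$ with $am=a$.
   Context: $S$ is a monoid with identity $1$ having at least one right non-invertible element. A (right) $S$-act is a nonempty set with an action $(a,s)\mapsto as$, $a1=a$, $a(st)=(as)t$. A subact is a nonempty subset closed under the action; a maximal subact is a proper subact not properly contained in another proper subact. $\mathfrak{M}=\{s\in S\mid st\neq1\ \forall t\in S\}$ is the unique maximal right ideal of $S$. $AI=\{as\mid a\in A, s\in I\}$. *)

theory Defs
  imports Main
begin

definition is_act :: "'a set \<Rightarrow> ('a \<Rightarrow> 's::monoid_mult \<Rightarrow> 'a) \<Rightarrow> bool" where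
  "is_act A act \<longleftrightarrow> A \<noteq> {} \<and> (\<forall>a\<in>A. \<forall>s. act a s \<in> A)
     \<and> (\<forall>a\<in>A. act a 1 = a) \<and> (\<forall>a\<in>A. \<forall>s t. act a (s * t) = act (act a s) t)"

definition subact :: "'a set \<Rightarrow> ('a \<Rightarrow> 's::monoid_mult \<Rightarrow> 'a) \<Rightarrow> 'a set \<Rightarrow> bool" where
  "subact A act B \<longleftrightarrow> B \<noteq> {} \<and> B \<subseteq> A \<and> (\<forall>b\<in>B. \<forall>s. act b s \<in> B)"

definition maximal_subact :: "'a set \<Rightarrow> ('a \<Rightarrow> 's::monoid_mult \<Rightarrow> 'a) \<Rightarrow> 'a set \<Rightarrow> bool" where
  "maximal_subact A act B \<longleftrightarrow> subact A act B \<and> B \<noteq> A \<and>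
     (\<forall>C. subact A act C \<and> C \<noteq> A \<and> B \<subseteq> C \<longrightarrow> C = B)"

definition right_ideal :: "'s::monoid_mult set \<Rightarrow> bool" where
  "right_ideal I \<longleftrightarrow> I \<noteq> {} \<and> (\<forall>x\<in>I. \<forall>s. x * s \<in> I)"

definition two_sided_ideal :: "'s::monoid_mult set \<Rightarrow> bool" where
  "two_sided_ideal I \<longleftrightarrow> right_ideal I \<and> (\<forall>x\<in>I. \<forall>s. s * x \<in> I)"

definition MM :: "'s::monoid_mult set" where
  "MM = {s. \<forall>t. s * t \<noteq> 1}"

definition act_set :: "('a \<Rightarrow> 's \<Rightarrow> 'a) \<Rightarrow> 'a set \<Rightarrow> 's set \<Rightarrow> 'a set" where
  "act_set act A I = {act a s | a s. a \<in> A \<and> s \<in> I}"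

end

theory Submission
  imports Defs
begin

text \<open>Since \<open>B\<close> is maximal and \<open>a \<notin> B\<close>, the subact \<open>B \<union> aS\<close> is all of \<open>A\<close>.
  From \<open>AI = A\<close> write \<open>a = a' s\<close> with \<open>s \<in> I\<close>; then \<open>a' \<notin> B\<close> (else \<open>a \<in> B\<close>), so
  \<open>a' = a t\<close> and \<open>a = a (t s)\<close>. A proper right ideal contains no right invertible
  element, so \<open>s \<in> \<M>\<close>, and \<open>t s \<in> \<M>\<close> because \<open>\<M>\<close> is two-sided.\<close>

lemma is_act_one: "is_act A act \<Longrightarrow> a \<in> A \<Longrightarrow> act a 1 = a"
  unfolding is_act_def by blast

lemma is_act_mult: "is_act A act \<Longrightarrow> a \<in> A \<Longrightarrow> act a (s * t) = act (act a s) t"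
  unfolding is_act_def by blast

lemma subact_closed: "subact A act B \<Longrightarrow> b \<in> B \<Longrightarrow> act b s \<in> B"
  unfolding subact_def by blast

lemma two_sided_ideal_mult_left: "two_sided_ideal J \<Longrightarrow> x \<in> J \<Longrightarrow> s * x \<in> J"
  unfolding two_sided_ideal_def by blast

lemma right_ideal_subset_MM:
  assumes "right_ideal I" and "I \<noteq> UNIV"
  shows "I \<subseteq> MM"
proof
  fix x assume x: "x \<in> I"
  show "x \<in> MM"
  proof (rule ccontr)
    assume "x \<notin> MM"
    then obtain t where "x * t = 1" unfolding MM_def by auto
    with assms(1) x have "1 \<in> I" unfolding right_ideal_def by metis
    with assms(1) have "I = UNIV" unfolding right_ideal_def by (metis UNIV_eq_I mult_1_left)
    with assms(2) show False ..
  qed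
qed

lemma subact_range_act:
  assumes "is_act A act" and "a \<in> A"
  shows "subact A act (range (act a))"
  unfolding subact_def
proof (intro conjI ballI allI)
  show "range (act a) \<subseteq> A" using assms unfolding is_act_def by auto
next
  fix b s assume "b \<in> range (act a)"
  then obtain u where "b = act a u" by blast
  then have "act b s = act a (u * s)" by (simp only: is_act_mult[OF assms])
  then show "act b s \<in> range (act a)" by simp
qed simp

lemma subact_Un:
  assumes "subact A act B" and "subact A act C"
  shows "subact A act (B \<union> C)"
  using assms unfolding subact_def by auto

lemma maximal_subact_Un_range_act:
  assumes act: "is_act A act" and maxB: "maximal_subact A act B" and a: "a \<in> A - B"
  shows "B \<union> range (act a) = A"
proof (rule ccontr)
  assume proper: "B \<union> range (act a) \<noteq> A"
  have subB: "subact A act B"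
    and maximal: "\<And>C. subact A act C \<Longrightarrow> C \<noteq> A \<Longrightarrow> B \<subseteq> C \<Longrightarrow> C = B"
    using maxB unfolding maximal_subact_def by blast+
  have "subact A act (B \<union> range (act a))"
    using subB act a by (intro subact_Un subact_range_act) auto
  with proper have "B \<union> range (act a) = B" by (intro maximal) auto
  moreover have "act a 1 = a" using a by (simp add: is_act_one[OF act])
  ultimately show False using a by (metis DiffD2 UnI2 rangeI)
qed

theorem corollary2p8:
  fixes A B :: "'a set" and act :: "'a \<Rightarrow> 's::monoid_mult \<Rightarrow> 'a" and I :: "'s set"
  assumes nonunit: "\<exists>s::'s. \<forall>t. s * t \<noteq> 1"
    and M_two_sided: "two_sided_ideal (MM :: 's set)"
    and act: "is_act A act"
    and maxB: "maximal_subact A act B"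
    and I: "right_ideal I" "I \<noteq> UNIV"
    and AI: "act_set act A I = A"
  shows "\<forall>a\<in>A - B. \<exists>m\<in>MM. act a m = a"
proof
  fix a assume a: "a \<in> A - B"
  then have aA: "a \<in> A" by simp
  have subB: "subact A act B" using maxB unfolding maximal_subact_def by simp
  from a AI have "a \<in> act_set act A I" by simp
  then obtain a' s where as: "a = act a' s" "a' \<in> A" "s \<in> I"
    unfolding act_set_def by auto
  have "a' \<notin> B"
  proof
    assume "a' \<in> B"
    then have "act a' s \<in> B" by (rule subact_closed[OF subB])
    with as(1) a show False by simp
  qed
  moreover have "a' \<in> B \<union> range (act a)"
    using maximal_subact_Un_range_act[OF act maxB a] as(2) by simp
  ultimately obtain t where t: "a' = act a t" by auto
  have "act a (t * s) = act (act a t) s" by (rule is_act_mult[OF act aA])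
  also have "\<dots> = a" by (simp only: t[symmetric] as(1)[symmetric])
  finally have "act a (t * s) = a" .
  moreover have "t * s \<in> MM"
    using as(3) right_ideal_subset_MM[OF I] by (intro two_sided_ideal_mult_left[OF M_two_sided]) auto
  ultimately show "\<exists>m\<in>MM. act a m = a" by blast
qed

end
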